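(* If $L$ is an algebraic lattice, then $\dim_\nabla(L)=\mathrm{cov}(\mathrm{mi}_\Delta(L))$. In particular, for $n<\infty$, $\dim_\nabla(L)=n$ if and only if $n$ is the maximum size of an antichain of $\mathrm{mi}_\Delta(L)$.
   Context: $\mathrm{mi}_\Delta(L)$ is the set of completely meet-irreducible elements of $L$ (elements $m$ having an upper cover $m^*$ such that $z>m$ implies $z\geq m^*$). The complete join-dimension $\dim_\nabla(L)$ is the least cardinal $\kappa$ such that there is a one-to-one map from $L$ into a direct product of $\kappa$ complete chains preserving arbitrary joins. $\mathrm{cov}(P)$ is the least number of chains whose union is the poset $P$. *)

theory Defs
  imports Main
begin

definition compact_el :: "'a::complete_lattice \<Rightarrow> bool" where
  "compact_el x \<longleftrightarrow> (\<forall>S. x \<le> Sup S \<longrightarrow> (\<exists>F\<subseteq>S. finite F \<and> x \<le> Sup F))"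

definition algebraic_lattice :: "'a::complete_lattice itself \<Rightarrow> bool" where
  "algebraic_lattice _ \<longleftrightarrow> (\<forall>x::'a. x = Sup {c. compact_el c \<and> c \<le> x})"

definition mi_Delta :: "'a::complete_lattice set" where
  "mi_Delta = {m. \<exists>ms. m < ms \<and> \<not> (\<exists>z. m < z \<and> z < ms) \<and> (\<forall>z. m < z \<longrightarrow> ms \<le> z)}"

definition is_lub_in :: "('c \<times> 'c) set \<Rightarrow> 'c set \<Rightarrow> 'c set \<Rightarrow> 'c \<Rightarrow> bool" where
  "is_lub_in r A S u \<longleftrightarrow> u \<in> A \<and> (\<forall>s\<in>S. (s, u) \<in> r)
      \<and> (\<forall>v\<in>A. (\<forall>s\<in>S. (s, v) \<in> r) \<longrightarrow> (u, v) \<in> r)"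

definition complete_chain :: "'c set \<Rightarrow> ('c \<times> 'c) set \<Rightarrow> bool" where
  "complete_chain A r \<longleftrightarrow> r \<subseteq> A \<times> A \<and> refl_on A r \<and> antisym r \<and> trans r
      \<and> total_on A r \<and> (\<forall>S\<subseteq>A. \<exists>u. is_lub_in r A S u)"

text \<open>The chains are carried by
  subsets of 'a (the coordinate images of such a map are complete chains of size
  at most |'a|, so this is no restriction).\<close>
definition join_embeds :: "'a::complete_lattice itself \<Rightarrow> 'i set \<Rightarrow> bool" where
  "join_embeds _ I \<longleftrightarrow> (\<exists>(C :: 'i \<Rightarrow> 'a set) (R :: 'i \<Rightarrow> ('a \<times> 'a) set) (f :: 'a \<Rightarrow> 'i \<Rightarrow> 'a).
      (\<forall>i\<in>I. complete_chain (C i) (R i))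
    \<and> (\<forall>x. \<forall>i\<in>I. f x i \<in> C i)
    \<and> (\<forall>x y. (\<forall>i\<in>I. f x i = f y i) \<longrightarrow> x = y)
    \<and> (\<forall>S. \<forall>i\<in>I. is_lub_in (R i) (C i) ((\<lambda>x. f x i) ` S) (f (Sup S) i)))"

text \<open>I realises the complete join-dimension: |I| is the least cardinal of an index
  set admitting such an embedding. (Index sets are taken in 'a set; this suffices
  since the join-dimension is at most |'a|.)\<close>
definition join_dim_is :: "'a::complete_lattice itself \<Rightarrow> 'a set \<Rightarrow> bool" where
  "join_dim_is T I \<longleftrightarrow> join_embeds T I
      \<and> (\<forall>J::'a set. join_embeds T J \<longrightarrow> (card_of I, card_of J) \<in> ordLeq)"

definition chain_cover :: "'a::order set \<Rightarrow> 'i set \<Rightarrow> bool" where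
  "chain_cover P J \<longleftrightarrow> (\<exists>Ch :: 'i \<Rightarrow> 'a set.
      (\<forall>j\<in>J. Ch j \<subseteq> P \<and> Complete_Partial_Order.chain (\<le>) (Ch j)) \<and> P = (\<Union>j\<in>J. Ch j))"

definition cov_is :: "'a::order set \<Rightarrow> 'a set \<Rightarrow> bool" where
  "cov_is P J \<longleftrightarrow> chain_cover P J
      \<and> (\<forall>K::'a set. chain_cover P K \<longrightarrow> (card_of J, card_of K) \<in> ordLeq)"

definition antichain_in :: "'a::order set \<Rightarrow> 'a set \<Rightarrow> bool" where
  "antichain_in P A \<longleftrightarrow> A \<subseteq> P \<and> (\<forall>x\<in>A. \<forall>y\<in>A. x \<le> y \<longrightarrow> x = y)"

end

theory Submission
  imports Defs
begin

text \<open>In an algebraic lattice every failure \<open>x \<not>\<le> y\<close> is witnessed by a completely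
  meet-irreducible \<open>m \<ge> y\<close> with \<open>x \<not>\<le> m\<close>: take a compact \<open>c \<le> x\<close> with \<open>c \<not>\<le> y\<close> and,
  by Zorn, an element \<open>m \<ge> y\<close> maximal with \<open>c \<not>\<le> m\<close>; its unique upper cover is \<open>m \<squnion> c\<close>.
  Hence a cover of \<open>mi_Delta\<close> by chains \<open>M\<^sub>j\<close> gives the join-preserving embedding
  \<open>x \<mapsto> (\<Sqinter>{m \<in> M\<^sub>j. x \<le> m})\<^sub>j\<close> into complete chains. Conversely, in a join-preserving
  embedding into chains each \<open>m \<in> mi_Delta\<close> differs from its upper cover in some coordinate,
  and two incomparable elements of \<open>mi_Delta\<close> cannot both be separated in the same coordinate,
  since both covers lie below \<open>m\<^sub>1 \<squnion> m\<^sub>2\<close>. So the two cardinals bound each other.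
  For the finite case, a chain cover of size \<open>n\<close> exists iff all antichains have at most \<open>n\<close>
  elements: this is Dilworth's theorem, proved for finite posets by induction and extended
  to infinite ones by a compactness argument.\<close>

section \<open>Completely meet-irreducible elements separate\<close>

lemma finite_chain_Sup_mem:
  fixes F :: "'a::complete_lattice set"
  assumes "finite F" "F \<noteq> {}" "Complete_Partial_Order.chain (\<le>) F"
  shows "Sup F \<in> F"
  using assms
proof (induction F rule: finite_ne_induct)
  case (singleton a)
  then show ?case by simp
next
  case (insert a F)
  then have "Sup F \<in> F"
    using chain_subset[OF insert.prems] by blast
  moreover have "a \<le> Sup F \<or> Sup F \<le> a"
    using insert.prems calculation by (auto dest: chainD)
  ultimately show ?case
    by (auto simp: sup.absorb1 sup.absorb2)
qed

lemma compact_below_not_le: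
  fixes x y :: "'a::complete_lattice"
  assumes "algebraic_lattice TYPE('a)" and "\<not> x \<le> y"
  obtains c where "compact_el c" "c \<le> x" "\<not> c \<le> y"
proof (rule ccontr)
  assume "\<not> thesis"
  then have "Sup {c. compact_el c \<and> c \<le> x} \<le> y"
    using that by (auto intro: Sup_least)
  moreover have "x = Sup {c. compact_el c \<and> c \<le> x}"
    using assms(1) unfolding algebraic_lattice_def by (rule spec)
  ultimately show False
    using assms(2) by simp
qed

lemma ex_maximal_not_above_compact:
  fixes c y :: "'a::complete_lattice"
  assumes c: "compact_el c" and "\<not> c \<le> y"
  obtains m where "y \<le> m" "\<not> c \<le> m" "\<And>z. m \<le> z \<Longrightarrow> \<not> c \<le> z \<Longrightarrow> z = m"
proof -
  define A where "A = {z. y \<le> z \<and> \<not> c \<le> z}"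
  have "\<exists>m\<in>A. \<forall>z\<in>A. m \<le> z \<longrightarrow> z = m"
  proof (rule predicate_Zorn)
    show "partial_order_on A (relation_of (\<le>) A)"
      by (rule partial_order_on_relation_ofI) auto
  next
    fix C assume "C \<in> Chains (relation_of (\<le>) A)"
    then have CA: "C \<subseteq> A" and chain: "Complete_Partial_Order.chain (\<le>) C"
      unfolding Chains_def relation_of_def by (auto intro: chainI)
    show "\<exists>u\<in>A. \<forall>z\<in>C. z \<le> u"
    proof (cases "C = {}")
      case True
      then show ?thesis using assms unfolding A_def by auto
    next
      case False
      \<comment> \<open>Compactness: if c were below the join of the chain, it would be below a finite
        subchain, hence below its largest element.\<close>
      have "\<not> c \<le> Sup C"
      proof
        assume "c \<le> Sup C"
        then obtain F where F: "F \<subseteq> C" "finite F" "c \<le> Sup F"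
          using c unfolding compact_el_def by blast
        show False
        proof (cases "F = {}")
          case True
          then show False using F \<open>\<not> c \<le> y\<close> by (simp add: bot_unique)
        next
          case False
          then have "Sup F \<in> F"
            using finite_chain_Sup_mem F chain_subset[OF chain] by blast
          then show False using F CA unfolding A_def by auto
        qed
      qed
      moreover have "y \<le> Sup C"
        using False CA unfolding A_def by (auto intro: order_trans Sup_upper)
      ultimately show ?thesis unfolding A_def by (auto intro: Sup_upper)
    qed
  qed
  then show ?thesis
    using that unfolding A_def by (auto intro: order_trans)
qed

lemma maximal_not_above_in_mi_Delta:
  fixes c m :: "'a::complete_lattice"
  assumes "\<not> c \<le> m" and max: "\<And>z. m \<le> z \<Longrightarrow> \<not> c \<le> z \<Longrightarrow> z = m"
  shows "m \<in> mi_Delta"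
proof -
  have above: "sup m c \<le> z" if "m < z" for z
  proof -
    have "c \<le> z"
      using max[of z] that by (metis less_le)
    then show ?thesis
      using that by simp
  qed
  then have "\<not> (\<exists>z. m < z \<and> z < sup m c)"
    using leD by blast
  moreover have "m < sup m c"
    using assms(1) by (simp add: less_le_not_le)
  ultimately show ?thesis
    unfolding mi_Delta_def using above by blast
qed

lemma mi_Delta_separates:
  fixes x y :: "'a::complete_lattice"
  assumes "algebraic_lattice TYPE('a)" and "\<not> x \<le> y"
  obtains m where "m \<in> mi_Delta" "y \<le> m" "\<not> x \<le> m"
proof -
  obtain c where c: "compact_el c" "c \<le> x" "\<not> c \<le> y"
    using compact_below_not_le assms by blast
  obtain m where "y \<le> m" "\<not> c \<le> m" "\<And>z. m \<le> z \<Longrightarrow> \<not> c \<le> z \<Longrightarrow> z = m"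
    using ex_maximal_not_above_compact c(1,3) by blast
  moreover from this have "m \<in> mi_Delta"
    by (intro maximal_not_above_in_mi_Delta)
  moreover have "\<not> x \<le> m"
    using c(2) \<open>\<not> c \<le> m\<close> order_trans by blast
  ultimately show ?thesis
    using that by blast
qed

section \<open>Chain covers of \<open>mi_Delta\<close> and join-embeddings into chains\<close>

definition meet_closure :: "'a::complete_lattice set \<Rightarrow> 'a \<Rightarrow> 'a" where
  "meet_closure M x = Inf {m \<in> M. x \<le> m}"

lemma le_meet_closure: "x \<le> meet_closure M x"
  unfolding meet_closure_def by (auto intro: Inf_greatest)

lemma meet_closure_le_iff:
  assumes "m \<in> M"
  shows "meet_closure M x \<le> m \<longleftrightarrow> x \<le> m"
proof
  assume "meet_closure M x \<le> m"
  then show "x \<le> m"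
    using le_meet_closure order_trans by blast
next
  assume "x \<le> m"
  then show "meet_closure M x \<le> m"
    unfolding meet_closure_def using assms by (auto intro: Inf_lower)
qed

lemma meet_closure_mono: "x \<le> y \<Longrightarrow> meet_closure M x \<le> meet_closure M y"
  unfolding meet_closure_def by (auto intro!: Inf_superset_mono intro: order_trans)

lemma meet_closure_idem: "meet_closure M (meet_closure M x) = meet_closure M x"
proof -
  have "{m \<in> M. meet_closure M x \<le> m} = {m \<in> M. x \<le> m}"
    using meet_closure_le_iff by blast
  then show ?thesis
    by (simp add: meet_closure_def[of M "meet_closure M x"]) (simp add: meet_closure_def)
qed

lemma meet_closure_linear:
  assumes "Complete_Partial_Order.chain (\<le>) M"
  shows "meet_closure M x \<le> meet_closure M y \<or> meet_closure M y \<le> meet_closure M x"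
proof -
  have "{m \<in> M. x \<le> m} \<subseteq> {m \<in> M. y \<le> m} \<or> {m \<in> M. y \<le> m} \<subseteq> {m \<in> M. x \<le> m}"
    using assms by (auto dest: chainD intro: order_trans)
  then show ?thesis
    unfolding meet_closure_def by (auto intro: Inf_superset_mono)
qed

lemma is_lub_in_meet_closure_Sup:
  fixes M :: "'a::complete_lattice set"
  defines "C \<equiv> range (meet_closure M)"
  shows "is_lub_in (relation_of (\<le>) C) C (meet_closure M ` S) (meet_closure M (Sup S))"
  unfolding is_lub_in_def relation_of_def
proof (intro conjI ballI impI)
  show "meet_closure M (Sup S) \<in> C"
    unfolding C_def by simp
  fix s assume "s \<in> meet_closure M ` S"
  then show "(s, meet_closure M (Sup S)) \<in> {(a, b). (a, b) \<in> C \<times> C \<and> a \<le> b}"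
    unfolding C_def by (auto intro!: meet_closure_mono Sup_upper)
next
  fix v assume v: "v \<in> C" and ub: "\<forall>s\<in>meet_closure M ` S. (s, v) \<in> {(a, b). (a, b) \<in> C \<times> C \<and> a \<le> b}"
  have "Sup S \<le> v"
    using ub le_meet_closure by (auto intro!: Sup_least intro: order_trans)
  then have "meet_closure M (Sup S) \<le> meet_closure M v"
    by (rule meet_closure_mono)
  also have "meet_closure M v = v"
    using v meet_closure_idem unfolding C_def by auto
  finally show "(meet_closure M (Sup S), v) \<in> {(a, b). (a, b) \<in> C \<times> C \<and> a \<le> b}"
    using v unfolding C_def by auto
qed

lemma complete_chain_meet_closure:
  fixes M :: "'a::complete_lattice set"
  assumes "Complete_Partial_Order.chain (\<le>) M"
  defines "C \<equiv> range (meet_closure M)"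
  shows "complete_chain C (relation_of (\<le>) C)"
  unfolding complete_chain_def
proof (intro conjI allI impI)
  show "relation_of (\<le>) C \<subseteq> C \<times> C"
    unfolding relation_of_def by auto
  show "refl_on C (relation_of (\<le>) C)"
    unfolding refl_on_def relation_of_def by auto
  show "antisym (relation_of (\<le>) C)" "trans (relation_of (\<le>) C)"
    by (auto intro: antisymp_onI transp_onI)
  show "total_on C (relation_of (\<le>) C)"
    using meet_closure_linear[OF assms(1)] unfolding total_on_def relation_of_def C_def by auto
  fix T assume "T \<subseteq> C"
  then have "meet_closure M t = t" if "t \<in> T" for t
    using that meet_closure_idem unfolding C_def by auto
  then have "meet_closure M ` T = T"
    by simp
  then show "\<exists>u. is_lub_in (relation_of (\<le>) C) C T u"
    using is_lub_in_meet_closure_Sup[of M T] unfolding C_def by metis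
qed

lemma join_embeds_if_chain_cover:
  fixes J :: "'i set"
  assumes sep: "\<And>x y::'a::complete_lattice. \<not> x \<le> y \<Longrightarrow> \<exists>m\<in>mi_Delta. y \<le> m \<and> \<not> x \<le> m"
    and "chain_cover (mi_Delta::'a set) J"
  shows "join_embeds TYPE('a) J"
proof -
  obtain Ch :: "'i \<Rightarrow> 'a set"
    where chains: "\<And>j. j \<in> J \<Longrightarrow> Complete_Partial_Order.chain (\<le>) (Ch j)"
      and cover: "mi_Delta = (\<Union>j\<in>J. Ch j)"
    using assms(2) unfolding chain_cover_def by blast
  have "x = y" if eq: "\<forall>j\<in>J. meet_closure (Ch j) x = meet_closure (Ch j) y" for x y
  proof (rule ccontr)
    assume "x \<noteq> y"
    then obtain a b where ab: "\<not> a \<le> b" "\<forall>j\<in>J. meet_closure (Ch j) a = meet_closure (Ch j) b"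
      using eq by (metis order.antisym)
    obtain m where m: "m \<in> mi_Delta" "b \<le> m" "\<not> a \<le> m"
      using sep ab(1) by blast
    then obtain j where "j \<in> J" "m \<in> Ch j"
      using cover by blast
    then show False
      using ab(2) m meet_closure_le_iff by metis
  qed
  then show ?thesis
    unfolding join_embeds_def
    using complete_chain_meet_closure[OF chains] is_lub_in_meet_closure_Sup
    by (intro exI[of _ "\<lambda>j. range (meet_closure (Ch j))"]
        exI[of _ "\<lambda>j. relation_of (\<le>) (range (meet_closure (Ch j)))"]
        exI[of _ "\<lambda>x j. meet_closure (Ch j) x"]) auto
qed

lemma join_preserving_mono:
  fixes f :: "'a::complete_lattice \<Rightarrow> 'c"
  assumes "\<And>S. is_lub_in R C (f ` S) (f (Sup S))" and "x \<le> y"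
  shows "(f x, f y) \<in> R"
proof -
  have "Sup {x, y} = y"
    using assms(2) by (simp add: sup.absorb2)
  then show ?thesis
    using assms(1)[of "{x, y}"] unfolding is_lub_in_def by simp
qed

text \<open>A join-preserving map into a chain cannot separate two incomparable elements of
  \<open>mi_Delta\<close> from their upper covers: both covers lie below \<open>m\<^sub>1 \<squnion> m\<^sub>2\<close>, whose
  image is the larger of the two images.\<close>

lemma join_preserving_chain_collapses_cover:
  fixes f :: "'a::complete_lattice \<Rightarrow> 'c"
  assumes chain: "complete_chain C R" and into: "\<And>x. f x \<in> C"
    and join: "\<And>S. is_lub_in R C (f ` S) (f (Sup S))"
    and cover1: "m\<^sub>1 < m\<^sub>1'" "\<And>z. m\<^sub>1 < z \<Longrightarrow> m\<^sub>1' \<le> z"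
    and cover2: "m\<^sub>2 < m\<^sub>2'" "\<And>z. m\<^sub>2 < z \<Longrightarrow> m\<^sub>2' \<le> z"
    and incomparable: "\<not> m\<^sub>1 \<le> m\<^sub>2" "\<not> m\<^sub>2 \<le> m\<^sub>1"
  shows "f m\<^sub>1 = f m\<^sub>1' \<or> f m\<^sub>2 = f m\<^sub>2'"
proof -
  have R: "total_on C R" "antisym R" "trans R" "refl_on C R"
    using chain unfolding complete_chain_def by auto
  have mono: "(f x, f y) \<in> R" if "x \<le> y" for x y
    using join_preserving_mono[OF join that] .
  have lub: "is_lub_in R C {f m\<^sub>1, f m\<^sub>2} (f (sup m\<^sub>1 m\<^sub>2))"
    using join[of "{m\<^sub>1, m\<^sub>2}"] by simp
  have "m\<^sub>1' \<le> sup m\<^sub>1 m\<^sub>2" "m\<^sub>2' \<le> sup m\<^sub>1 m\<^sub>2"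
    using incomparable cover1(2) cover2(2) by (auto simp: less_le_not_le)
  then have up: "(f m\<^sub>1', f (sup m\<^sub>1 m\<^sub>2)) \<in> R" "(f m\<^sub>2', f (sup m\<^sub>1 m\<^sub>2)) \<in> R"
    by (auto intro: mono)
  have below: "(f m\<^sub>1, f m\<^sub>1') \<in> R" "(f m\<^sub>2, f m\<^sub>2') \<in> R"
    using cover1(1) cover2(1) by (auto intro: mono)
  have "(f m\<^sub>1, f m\<^sub>2) \<in> R \<or> (f m\<^sub>2, f m\<^sub>1) \<in> R"
    using R(1,4) into unfolding total_on_def refl_on_def by metis
  then show ?thesis
  proof
    assume "(f m\<^sub>1, f m\<^sub>2) \<in> R"
    then have "(f (sup m\<^sub>1 m\<^sub>2), f m\<^sub>2) \<in> R"
      using lub into R(4) unfolding is_lub_in_def refl_on_def by auto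
    then show ?thesis
      using up(2) below(2) R(2,3) unfolding antisym_def trans_def by metis
  next
    assume "(f m\<^sub>2, f m\<^sub>1) \<in> R"
    then have "(f (sup m\<^sub>1 m\<^sub>2), f m\<^sub>1) \<in> R"
      using lub into R(4) unfolding is_lub_in_def refl_on_def by auto
    then show ?thesis
      using up(1) below(1) R(2,3) unfolding antisym_def trans_def by metis
  qed
qed

lemma chain_cover_if_join_embeds:
  fixes I :: "'i set"
  assumes "join_embeds TYPE('a::complete_lattice) I"
  shows "chain_cover (mi_Delta::'a set) I"
proof -
  obtain C :: "'i \<Rightarrow> 'a set" and R and f :: "'a \<Rightarrow> 'i \<Rightarrow> 'a"
    where chains: "\<And>i. i \<in> I \<Longrightarrow> complete_chain (C i) (R i)"
      and into: "\<And>x i. i \<in> I \<Longrightarrow> f x i \<in> C i"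
      and inj: "\<And>x y. \<forall>i\<in>I. f x i = f y i \<Longrightarrow> x = y"
      and join: "\<And>S i. i \<in> I \<Longrightarrow> is_lub_in (R i) (C i) ((\<lambda>x. f x i) ` S) (f (Sup S) i)"
    using assms unfolding join_embeds_def by blast
  have "\<exists>m' i. m < m' \<and> (\<forall>z. m < z \<longrightarrow> m' \<le> z) \<and> i \<in> I \<and> f m i \<noteq> f m' i"
    if "m \<in> mi_Delta" for m
  proof -
    obtain m' where m': "m < m'" "\<forall>z. m < z \<longrightarrow> m' \<le> z"
      using \<open>m \<in> mi_Delta\<close> unfolding mi_Delta_def by blast
    then obtain i where "i \<in> I" "f m i \<noteq> f m' i"
      using inj by blast
    with m' show ?thesis by blast
  qed
  then obtain cov :: "'a \<Rightarrow> 'a" and sep :: "'a \<Rightarrow> 'i"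
    where cov: "\<And>m. m \<in> mi_Delta \<Longrightarrow> m < cov m \<and> (\<forall>z. m < z \<longrightarrow> cov m \<le> z)"
      and sep: "\<And>m. m \<in> mi_Delta \<Longrightarrow> sep m \<in> I \<and> f m (sep m) \<noteq> f (cov m) (sep m)"
    by metis
  have "Complete_Partial_Order.chain (\<le>) {m \<in> mi_Delta. sep m = i}" if "i \<in> I" for i
  proof (rule chainI, rule ccontr)
    fix m\<^sub>1 m\<^sub>2 assume m: "m\<^sub>1 \<in> {m \<in> mi_Delta. sep m = i}" "m\<^sub>2 \<in> {m \<in> mi_Delta. sep m = i}"
      and "\<not> (m\<^sub>1 \<le> m\<^sub>2 \<or> m\<^sub>2 \<le> m\<^sub>1)"
    then have "f m\<^sub>1 i = f (cov m\<^sub>1) i \<or> f m\<^sub>2 i = f (cov m\<^sub>2) i"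
      using join_preserving_chain_collapses_cover[OF chains[OF that], of "\<lambda>x. f x i"]
        into[OF that] join[OF that] cov by auto
    then show False
      using m sep by (metis (mono_tags, lifting) mem_Collect_eq)
  qed
  then show ?thesis
    unfolding chain_cover_def using sep
    by (intro exI[of _ "\<lambda>i. {m \<in> mi_Delta. sep m = i}"]) auto
qed

section \<open>Dilworth's theorem\<close>

definition chain_colouring :: "nat \<Rightarrow> 'a::order set \<Rightarrow> ('a \<Rightarrow> nat) \<Rightarrow> bool" where
  "chain_colouring k P c \<longleftrightarrow> (\<forall>x\<in>P. c x < k) \<and> (\<forall>x\<in>P. \<forall>y\<in>P. c x = c y \<longrightarrow> x \<le> y \<or> y \<le> x)"

definition width_le :: "nat \<Rightarrow> 'a::order set \<Rightarrow> bool" where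
  "width_le k P \<longleftrightarrow> (\<forall>A. antichain_in P A \<longrightarrow> finite A \<longrightarrow> card A \<le> k)"

lemma chain_colouring_subset: "chain_colouring k P c \<Longrightarrow> Q \<subseteq> P \<Longrightarrow> chain_colouring k Q c"
  unfolding chain_colouring_def by blast

lemma antichain_in_mono: "antichain_in Q A \<Longrightarrow> Q \<subseteq> P \<Longrightarrow> antichain_in P A"
  unfolding antichain_in_def by auto

lemma width_le_subset: "width_le k P \<Longrightarrow> Q \<subseteq> P \<Longrightarrow> width_le k Q"
  unfolding width_le_def by (meson antichain_in_mono)

lemma chain_colouring_inj_on_antichain:
  assumes "chain_colouring k P c" and "antichain_in P A"
  shows "inj_on c A"
proof (rule inj_onI)
  fix x y assume "x \<in> A" "y \<in> A" "c x = c y"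
  then show "x = y"
    using assms unfolding chain_colouring_def antichain_in_def by blast
qed

lemma chain_colouring_antichain_image:
  assumes "chain_colouring k P c" "antichain_in P A" "finite A" "card A = k"
  shows "c ` A = {..<k}"
proof (rule card_seteq)
  show "c ` A \<subseteq> {..<k}"
    using assms(1,2) unfolding chain_colouring_def antichain_in_def by auto
  show "card {..<k} \<le> card (c ` A)"
    using chain_colouring_inj_on_antichain[OF assms(1,2)] assms(4) by (simp add: card_image)
qed simp

lemma max_antichain_splits:
  assumes "width_le k P" "antichain_in P A" "finite A" "card A = k"
  shows "P = {x \<in> P. \<exists>a\<in>A. a \<le> x} \<union> {x \<in> P. \<exists>a\<in>A. x \<le> a}"
proof (rule ccontr)
  assume "P \<noteq> {x \<in> P. \<exists>a\<in>A. a \<le> x} \<union> {x \<in> P. \<exists>a\<in>A. x \<le> a}"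
  then obtain z where z: "z \<in> P" "\<forall>a\<in>A. \<not> a \<le> z \<and> \<not> z \<le> a"
    by auto
  then have "antichain_in P (insert z A)" and "z \<notin> A"
    using assms(2) unfolding antichain_in_def by auto
  moreover have "card (insert z A) = Suc k"
    using \<open>z \<notin> A\<close> assms(3,4) by simp
  moreover have "card (insert z A) \<le> k"
    using assms(1,3) \<open>antichain_in P (insert z A)\<close> unfolding width_le_def by simp
  ultimately show False
    by simp
qed

text \<open>Recolour \<open>d\<close> by the permutation of colours that makes it agree with \<open>c\<close> on \<open>A\<close>.\<close>

lemma chain_colouring_match:
  assumes c: "chain_colouring k P c" and d: "chain_colouring k Q d"
    and A: "antichain_in P A" "A \<subseteq> Q" "finite A" "card A = k"
  obtains d' where "chain_colouring k Q d'" "\<And>a. a \<in> A \<Longrightarrow> d' a = c a"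
proof
  have AQ: "antichain_in Q A"
    using A(1,2) unfolding antichain_in_def by blast
  have d_img: "d ` A = {..<k}"
    using chain_colouring_antichain_image[OF d AQ A(3,4)] .
  have inj_c: "inj_on c A" and inj_d: "inj_on d A"
    using chain_colouring_inj_on_antichain c d A(1) AQ by blast+
  have rep: "inv_into A d (d x) \<in> A" "d (inv_into A d (d x)) = d x" if "x \<in> Q" for x
    using d that d_img unfolding chain_colouring_def
    by (auto intro: inv_into_into f_inv_into_f)
  show "chain_colouring k Q (\<lambda>x. c (inv_into A d (d x)))"
    unfolding chain_colouring_def
  proof (intro conjI ballI impI)
    fix x assume "x \<in> Q"
    then show "c (inv_into A d (d x)) < k"
      using rep c A(1) unfolding chain_colouring_def antichain_in_def by blast
  next
    fix x y assume xy: "x \<in> Q" "y \<in> Q" and "c (inv_into A d (d x)) = c (inv_into A d (d y))"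
    then have "inv_into A d (d x) = inv_into A d (d y)"
      using inj_c rep by (meson inj_onD)
    then have "d x = d y"
      using rep xy by metis
    then show "x \<le> y \<or> y \<le> x"
      using d xy unfolding chain_colouring_def by blast
  qed
  show "c (inv_into A d (d a)) = c a" if "a \<in> A" for a
    using inv_into_f_f[OF inj_d that] by simp
qed

lemma chain_colouring_glue:
  fixes P A :: "'a::order set"
  defines "U \<equiv> {x \<in> P. \<exists>a\<in>A. a \<le> x}" and "D \<equiv> {x \<in> P. \<exists>a\<in>A. x \<le> a}"
  assumes A: "antichain_in P A" "finite A" "card A = k" and split: "P = U \<union> D"
    and c: "chain_colouring k U c" and d: "chain_colouring k D d" and agree: "\<And>a. a \<in> A \<Longrightarrow> c a = d a"
  shows "chain_colouring k P (\<lambda>x. if x \<in> U then c x else d x)"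
proof -
  have AD: "antichain_in D A"
    using A(1) unfolding antichain_in_def D_def by auto
  have cross: "y \<le> x" if x: "x \<in> U" and y: "y \<in> P - U" and eq: "c x = d y" for x y
  proof -
    have "y \<in> D" using y split by blast
    then have "d y \<in> d ` A"
      using chain_colouring_antichain_image[OF d AD A(2,3)] d unfolding chain_colouring_def by auto
    then obtain a where a: "a \<in> A" "d a = d y"
      by auto
    have aP: "a \<in> P" using a(1) A(1) unfolding antichain_in_def by blast
    have "y \<le> a \<or> a \<le> y"
      using d a AD \<open>y \<in> D\<close> unfolding chain_colouring_def antichain_in_def by blast
    then have ya: "y \<le> a"
      using y a(1) aP unfolding U_def by blast
    have "a \<in> U" using a(1) aP unfolding U_def by blast
    then have "x \<le> a \<or> a \<le> x"
      using c x eq a agree unfolding chain_colouring_def by metis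
    moreover have "x = a" if "x \<le> a"
    proof -
      obtain a' where "a' \<in> A" "a' \<le> x" using x unfolding U_def by blast
      then show ?thesis
        using that a(1) A(1) unfolding antichain_in_def by (metis order.antisym order_trans)
    qed
    ultimately show ?thesis
      using ya order_trans by blast
  qed
  show ?thesis
    unfolding chain_colouring_def
  proof (intro conjI ballI impI)
    fix x assume "x \<in> P"
    then show "(if x \<in> U then c x else d x) < k"
      using c d split unfolding chain_colouring_def by auto
  next
    fix x y assume xy: "x \<in> P" "y \<in> P" and eq: "(if x \<in> U then c x else d x) = (if y \<in> U then c y else d y)"
    consider "x \<in> U" "y \<in> U" | "x \<in> U" "y \<notin> U" | "x \<notin> U" "y \<in> U" | "x \<notin> U" "y \<notin> U"
      by blast
    then show "x \<le> y \<or> y \<le> x"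
    proof cases
      case 1 then show ?thesis using c eq unfolding chain_colouring_def by auto
    next
      case 2 then show ?thesis using cross[of x y] xy eq by auto
    next
      case 3 then show ?thesis using cross[of y x] xy eq by auto
    next
      case 4 then show ?thesis using d eq xy split unfolding chain_colouring_def by auto
    qed
  qed
qed

lemma width_le_remove_extremal:
  assumes width: "width_le (Suc k) P" and "x \<in> P" "y \<in> P"
    and minimal: "\<forall>b\<in>P. b \<le> x \<longrightarrow> b = x" and maximal: "\<forall>b\<in>P. y \<le> b \<longrightarrow> b = y"
    and no_split: "\<And>A. antichain_in P A \<Longrightarrow> finite A \<Longrightarrow> card A = Suc k \<Longrightarrow>
      {z \<in> P. \<exists>a\<in>A. a \<le> z} = P \<or> {z \<in> P. \<exists>a\<in>A. z \<le> a} = P"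
  shows "width_le k (P - {x, y})"
  unfolding width_le_def
proof (intro allI impI)
  fix B assume B: "antichain_in (P - {x, y}) B" "finite B"
  then have BP: "antichain_in P B"
    using antichain_in_mono by blast
  show "card B \<le> k"
  proof (rule ccontr)
    assume "\<not> card B \<le> k"
    then have "card B = Suc k"
      using width BP B(2) unfolding width_le_def by fastforce
    then have "{z \<in> P. \<exists>a\<in>B. a \<le> z} = P \<or> {z \<in> P. \<exists>a\<in>B. z \<le> a} = P"
      using no_split BP B(2) by blast
    then obtain a where "a \<in> B" "a \<le> x \<or> y \<le> a"
      using \<open>x \<in> P\<close> \<open>y \<in> P\<close> by blast
    moreover have "a \<in> P" "a \<noteq> x" "a \<noteq> y"
      using \<open>a \<in> B\<close> B(1) unfolding antichain_in_def by auto
    ultimately show False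
      using minimal maximal by blast
  qed
qed

lemma chain_colouring_add_chain:
  assumes "chain_colouring k (P - C) c" and "Complete_Partial_Order.chain (\<le>) C"
  shows "chain_colouring (Suc k) P (\<lambda>z. if z \<in> C then k else c z)"
  unfolding chain_colouring_def
proof (intro conjI ballI impI)
  fix x y assume "x \<in> P" "y \<in> P" "(if x \<in> C then k else c x) = (if y \<in> C then k else c y)"
  then show "x \<le> y \<or> y \<le> x"
    using assms unfolding chain_colouring_def by (auto dest: chainD split: if_splits)
next
  fix x assume "x \<in> P"
  then show "(if x \<in> C then k else c x) < Suc k"
    using assms(1) unfolding chain_colouring_def by (auto intro: less_SucI)
qed

lemma chain_colouring_split_max_antichain:
  fixes P A :: "'a::order set"
  assumes "width_le k P" and A: "antichain_in P A" "finite A" "card A = k"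
    and c: "chain_colouring k {x \<in> P. \<exists>a\<in>A. a \<le> x} c"
    and d: "chain_colouring k {x \<in> P. \<exists>a\<in>A. x \<le> a} d"
  shows "\<exists>e. chain_colouring k P e"
proof -
  have "antichain_in {x \<in> P. \<exists>a\<in>A. a \<le> x} A" "A \<subseteq> {x \<in> P. \<exists>a\<in>A. x \<le> a}"
    using A(1) unfolding antichain_in_def by auto
  then obtain d' where d': "chain_colouring k {x \<in> P. \<exists>a\<in>A. x \<le> a} d'"
    and agree: "\<And>a. a \<in> A \<Longrightarrow> d' a = c a"
    using chain_colouring_match[OF c d] A(2,3) by blast
  have "chain_colouring k P (\<lambda>x. if x \<in> {x \<in> P. \<exists>a\<in>A. a \<le> x} then c x else d' x)"
    using chain_colouring_glue[OF A max_antichain_splits[OF assms(1) A] c d'] agree by simp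
  then show ?thesis by blast
qed

lemma finite_ex_minimal_le_maximal:
  fixes P :: "'a::order set"
  assumes "finite P" "P \<noteq> {}"
  obtains x y where "x \<in> P" "y \<in> P" "x \<le> y"
    "\<forall>b\<in>P. b \<le> x \<longrightarrow> b = x" "\<forall>b\<in>P. y \<le> b \<longrightarrow> b = y"
proof -
  obtain x where x: "x \<in> P" "\<forall>b\<in>P. b \<le> x \<longrightarrow> x = b"
    using finite_has_minimal[OF assms] by blast
  obtain y where "y \<in> {z \<in> P. x \<le> z}" and y: "\<forall>b\<in>{z \<in> P. x \<le> z}. y \<le> b \<longrightarrow> y = b"
    using finite_has_maximal[of "{z \<in> P. x \<le> z}"] assms(1) x(1) by auto
  then have "y \<in> P" "x \<le> y" "\<forall>b\<in>P. y \<le> b \<longrightarrow> b = y"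
    using order_trans by auto
  then show thesis
    using that x by auto
qed

lemma dilworth_finite:
  fixes P :: "'a::order set"
  assumes "finite P" and "width_le k P"
  shows "\<exists>c. chain_colouring k P c"
  using assms
proof (induction "card P" arbitrary: P k rule: less_induct)
  case less
  have IH: "\<exists>c. chain_colouring k' Q c"
    if "card Q < card P" "finite Q" "width_le k' Q" for Q :: "'a set" and k'
    using less.hyps[OF that] .
  have proper: "\<exists>c. chain_colouring k Q c" if "Q \<subseteq> P" "Q \<noteq> P" for Q
  proof (rule IH)
    show "card Q < card P"
      using that less.prems(1) by (intro psubset_card_mono) auto
    show "finite Q"
      using that(1) less.prems(1) by (rule finite_subset)
    show "width_le k Q"
      using less.prems(2) that(1) by (rule width_le_subset)
  qed
  show ?case
  proof (cases "\<exists>A. antichain_in P A \<and> finite A \<and> card A = k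
      \<and> {x \<in> P. \<exists>a\<in>A. a \<le> x} \<noteq> P \<and> {x \<in> P. \<exists>a\<in>A. x \<le> a} \<noteq> P")
    case True
    then obtain A where A: "antichain_in P A" "finite A" "card A = k"
      and U: "{x \<in> P. \<exists>a\<in>A. a \<le> x} \<noteq> P" and D: "{x \<in> P. \<exists>a\<in>A. x \<le> a} \<noteq> P"
      by blast
    obtain c where "chain_colouring k {x \<in> P. \<exists>a\<in>A. a \<le> x} c"
      using proper[OF _ U] by blast
    moreover obtain d where "chain_colouring k {x \<in> P. \<exists>a\<in>A. x \<le> a} d"
      using proper[OF _ D] by blast
    ultimately show ?thesis
      using chain_colouring_split_max_antichain[OF less.prems(2) A] by blast
  next
    case no_split: False
    show ?thesis
    proof (cases "P = {}")
      case True
      then show ?thesis unfolding chain_colouring_def by blast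
    next
      case False
      \<comment> \<open>As no maximum antichain splits \<open>P\<close> properly, each one contains the minimal \<open>x\<close>
        or the maximal \<open>y\<close>; removing the chain \<open>{x, y}\<close> therefore lowers the width.\<close>
      obtain x y where xy: "x \<in> P" "y \<in> P" "x \<le> y"
        "\<forall>b\<in>P. b \<le> x \<longrightarrow> b = x" "\<forall>b\<in>P. y \<le> b \<longrightarrow> b = y"
        using finite_ex_minimal_le_maximal[OF less.prems(1) False] by blast
      have "antichain_in P {x}"
        using xy(1) unfolding antichain_in_def by simp
      then have "1 \<le> k"
        using less.prems(2) unfolding width_le_def by fastforce
      then obtain k' where k: "k = Suc k'"
        using not0_implies_Suc by fastforce
      have "{z \<in> P. \<exists>a\<in>A. a \<le> z} = P \<or> {z \<in> P. \<exists>a\<in>A. z \<le> a} = P"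
        if "antichain_in P A" "finite A" "card A = Suc k'" for A
        using no_split that k by blast
      then have "width_le k' (P - {x, y})"
        using width_le_remove_extremal[of k' P x y] less.prems(2) xy k by simp
      moreover have "card (P - {x, y}) < card P"
        using less.prems(1) xy(1) by (intro psubset_card_mono) auto
      ultimately obtain c where "chain_colouring k' (P - {x, y}) c"
        using IH less.prems(1) by blast
      moreover have "Complete_Partial_Order.chain (\<le>) {x, y}"
        using xy(3) by (auto intro: chainI)
      ultimately show ?thesis
        using chain_colouring_add_chain k by blast
    qed
  qed
qed

definition agrees_on :: "('a \<times> nat) set \<Rightarrow> 'a set \<Rightarrow> ('a \<Rightarrow> nat) \<Rightarrow> bool" where
  "agrees_on G F c \<longleftrightarrow> (\<forall>x i. (x, i) \<in> G \<longrightarrow> x \<in> F \<longrightarrow> c x = i)"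

text \<open>A partial colour assignment \<open>G\<close> is a relation between elements and colours. By Zorn
  there is a maximal finitely extendable one, and maximality forces it to be total.\<close>

definition finitely_extendable :: "nat \<Rightarrow> 'a::order set \<Rightarrow> ('a \<times> nat) set \<Rightarrow> bool" where
  "finitely_extendable k P G \<longleftrightarrow>
    (\<forall>F\<subseteq>P. finite F \<longrightarrow> (\<exists>c. chain_colouring k F c \<and> agrees_on G F c))"

lemma finitely_extendableD:
  assumes "finitely_extendable k P G" "F \<subseteq> P" "finite F"
  obtains c where "chain_colouring k F c" "agrees_on G F c"
  using assms unfolding finitely_extendable_def by blast

lemma finitely_extendable_empty:
  "width_le k P \<Longrightarrow> finitely_extendable k P {}"
  unfolding finitely_extendable_def agrees_on_def using dilworth_finite width_le_subset by blast

lemma finitely_extendable_colour_bound: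
  assumes "finitely_extendable k P G" "(x, i) \<in> G" "x \<in> P"
  shows "i < k"
proof (rule finitely_extendableD[OF assms(1), of "{x}"])
  fix c assume "chain_colouring k {x} c" "agrees_on G {x} c"
  then show "i < k"
    using assms(2) unfolding chain_colouring_def agrees_on_def by force
qed (use assms(3) in auto)

lemma finitely_extendable_Union_chain:
  assumes "C \<noteq> {}" "subset.chain A C" and ext: "\<And>G. G \<in> C \<Longrightarrow> finitely_extendable k P G"
  shows "finitely_extendable k P (\<Union>C)"
  unfolding finitely_extendable_def
proof (intro allI impI)
  fix F assume F: "F \<subseteq> P" "finite F"
  define T where "T = {p \<in> \<Union>C. fst p \<in> F}"
  have "T \<subseteq> F \<times> {..<k}"
  proof
    fix p assume "p \<in> T"
    moreover obtain x i where p: "p = (x, i)"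
      by fastforce
    ultimately obtain G where "G \<in> C" "(x, i) \<in> G" "x \<in> F"
      unfolding T_def by auto
    then show "p \<in> F \<times> {..<k}"
      unfolding p
      using finitely_extendable_colour_bound[OF ext] F(1) by blast
  qed
  then have "finite T"
    by (rule finite_subset) (simp add: F(2))
  then obtain G where G: "G \<in> C" "T \<subseteq> G"
    using finite_subset_Union_chain[of T C A] assms(1,2) unfolding T_def by blast
  then obtain c where c: "chain_colouring k F c" and agree: "agrees_on G F c"
    using finitely_extendableD[OF ext F] by metis
  have "c x = i" if "(x, i) \<in> \<Union>C" "x \<in> F" for x i
  proof -
    have "(x, i) \<in> G"
      using G(2) that unfolding T_def by auto
    then show ?thesis
      using agree that(2) unfolding agrees_on_def by blast
  qed
  with c show "\<exists>c. chain_colouring k F c \<and> agrees_on (\<Union>C) F c"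
    unfolding agrees_on_def by blast
qed

text \<open>If every colour \<open>i < k\<close> for \<open>x\<close> failed on some finite \<open>F\<^sub>i\<close>, then a colouring of
  \<open>{x} \<union> \<Union>\<^sub>i F\<^sub>i\<close> agreeing with \<open>G\<close> would contradict the failure for its own colour of \<open>x\<close>.\<close>

lemma finitely_extendable_insert:
  assumes ext: "finitely_extendable k P G" and x: "x \<in> P"
  obtains i where "finitely_extendable k P (insert (x, i) G)"
proof (rule ccontr)
  assume "\<not> thesis"
  have "\<forall>i. \<exists>F. F \<subseteq> P \<and> finite F \<and> \<not> (\<exists>c. chain_colouring k F c \<and> agrees_on (insert (x, i) G) F c)"
  proof
    fix i
    have "\<not> finitely_extendable k P (insert (x, i) G)"
      using \<open>\<not> thesis\<close> that by (rule contrapos_nn)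
    then show "\<exists>F. F \<subseteq> P \<and> finite F \<and> \<not> (\<exists>c. chain_colouring k F c \<and> agrees_on (insert (x, i) G) F c)"
      unfolding finitely_extendable_def by (simp only: not_all not_imp)
  qed
  then obtain Fs where "\<forall>i. Fs i \<subseteq> P \<and> finite (Fs i)
      \<and> \<not> (\<exists>c. chain_colouring k (Fs i) c \<and> agrees_on (insert (x, i) G) (Fs i) c)"
    by (rule choice[THEN exE])
  then have Fs: "Fs i \<subseteq> P" "finite (Fs i)"
    and bad: "\<not> (\<exists>c. chain_colouring k (Fs i) c \<and> agrees_on (insert (x, i) G) (Fs i) c)"
    for i by blast+
  define F where "F = insert x (\<Union>i<k. Fs i)"
  have "F \<subseteq> P" "finite F"
    unfolding F_def using Fs x by auto
  then obtain c where c: "chain_colouring k F c" and agree: "agrees_on G F c"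
    using finitely_extendableD[OF ext] by metis
  then have "c x < k"
    unfolding chain_colouring_def F_def by simp
  then have sub: "Fs (c x) \<subseteq> F"
    unfolding F_def by auto
  have "agrees_on (insert (x, c x) G) (Fs (c x)) c"
    using agree sub unfolding agrees_on_def by auto
  then show False
    using bad[of "c x"] chain_colouring_subset[OF c sub] by blast
qed

lemma chain_colouring_if_finitely_extendable_total:
  assumes ext: "finitely_extendable k P G" and total: "\<And>x. x \<in> P \<Longrightarrow> \<exists>i. (x, i) \<in> G"
  shows "chain_colouring k P (\<lambda>x. SOME i. (x, i) \<in> G)"
  unfolding chain_colouring_def
proof (intro conjI ballI impI)
  have col: "(x, SOME i. (x, i) \<in> G) \<in> G" if "x \<in> P" for x
    using total[OF that] by (rule someI_ex)
  fix x assume x: "x \<in> P"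
  show "(SOME i. (x, i) \<in> G) < k"
    using finitely_extendable_colour_bound[OF ext col[OF x] x] .
  fix y assume y: "y \<in> P" and eq: "(SOME i. (x, i) \<in> G) = (SOME i. (y, i) \<in> G)"
  obtain c where "chain_colouring k {x, y} c" "agrees_on G {x, y} c"
    using finitely_extendableD[OF ext, of "{x, y}"] x y by blast
  moreover have "c x = c y"
    using calculation(2) col[OF x] col[OF y] eq unfolding agrees_on_def by simp
  ultimately show "x \<le> y \<or> y \<le> x"
    unfolding chain_colouring_def by simp
qed

theorem dilworth:
  fixes P :: "'a::order set"
  assumes "width_le k P"
  shows "\<exists>c. chain_colouring k P c"
proof -
  have "\<exists>M\<in>Collect (finitely_extendable k P). \<forall>G\<in>Collect (finitely_extendable k P). M \<subseteq> G \<longrightarrow> G = M"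
  proof (rule Zorn_Lemma, intro ballI)
    fix C assume "C \<in> chains (Collect (finitely_extendable k P))"
    then have chain: "subset.chain (Collect (finitely_extendable k P)) C"
      by (simp add: chains_alt_def)
    show "\<Union>C \<in> Collect (finitely_extendable k P)"
    proof (cases "C = {}")
      case True
      then show ?thesis
        using finitely_extendable_empty[OF assms] by simp
    next
      case False
      have "finitely_extendable k P G" if "G \<in> C" for G
        using chain that by (auto simp: subset_chain_def)
      then show ?thesis
        using finitely_extendable_Union_chain[OF False chain] by blast
    qed
  qed
  then obtain M where M: "finitely_extendable k P M"
    and max: "\<And>G. finitely_extendable k P G \<Longrightarrow> M \<subseteq> G \<Longrightarrow> G = M"
    by blast
  have "\<exists>i. (x, i) \<in> M" if x: "x \<in> P" for x
  proof -
    obtain i where "finitely_extendable k P (insert (x, i) M)"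
      using finitely_extendable_insert[OF M x] .
    then have "insert (x, i) M = M"
      using max by blast
    then show ?thesis by blast
  qed
  then show ?thesis
    using chain_colouring_if_finitely_extendable_total[OF M] by blast
qed

lemma chain_cover_if_chain_colouring:
  fixes P :: "'a::order set"
  assumes "chain_colouring k P c"
  shows "\<exists>R::'a set. finite R \<and> card R \<le> k \<and> chain_cover P R"
proof -
  define R where "R = inv_into P c ` c ` P"
  have colours: "c ` P \<subseteq> {..<k}"
    using assms unfolding chain_colouring_def by auto
  then have "finite (c ` P)"
    by (rule finite_subset) simp
  moreover have "card (c ` P) \<le> k"
    using card_mono[OF _ colours] by simp
  ultimately have "finite R" "card R \<le> k"
    unfolding R_def using card_image_le[of "c ` P" "inv_into P c"] by simp_all
  moreover have "chain_cover P R"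
    unfolding chain_cover_def
  proof (intro exI[of _ "\<lambda>r. {x \<in> P. c x = c r}"] conjI ballI)
    fix r
    show "{x \<in> P. c x = c r} \<subseteq> P" by blast
    show "Complete_Partial_Order.chain (\<le>) {x \<in> P. c x = c r}"
    proof (rule chainI)
      fix x y assume "x \<in> {x \<in> P. c x = c r}" "y \<in> {x \<in> P. c x = c r}"
      then have "x \<in> P" "y \<in> P" "c x = c y"
        by auto
      then show "x \<le> y \<or> y \<le> x"
        using assms unfolding chain_colouring_def by blast
    qed
  next
    show "P = (\<Union>r\<in>R. {x \<in> P. c x = c r})"
    proof
      show "P \<subseteq> (\<Union>r\<in>R. {x \<in> P. c x = c r})"
      proof
        fix x assume "x \<in> P"
        then have "c x \<in> c ` P"
          by (rule imageI)
        then have "inv_into P c (c x) \<in> R" and "c (inv_into P c (c x)) = c x"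
          unfolding R_def by (rule imageI, rule f_inv_into_f)
        with \<open>x \<in> P\<close> show "x \<in> (\<Union>r\<in>R. {x \<in> P. c x = c r})"
          by (intro UN_I[of "inv_into P c (c x)"]) auto
      qed
    qed blast
  qed
  ultimately show ?thesis by blast
qed

section \<open>Chain covering number and complete join-dimension\<close>

lemma ex_card_of_minimal:
  fixes Q :: "'i set \<Rightarrow> bool"
  assumes "Q I\<^sub>0"
  obtains I where "Q I" "\<And>J. Q J \<Longrightarrow> (card_of I, card_of J) \<in> ordLeq"
proof -
  let ?R = "card_of ` Collect Q"
  have "?R \<noteq> {}"
    using assms by blast
  moreover have "\<forall>r\<in>?R. Well_order r"
    by (simp add: card_of_Well_order)
  ultimately obtain I where "Q I" "\<forall>r'\<in>?R. (card_of I, r') \<in> ordLeq"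
    using exists_minim_Well_order[of ?R] by auto
  then show thesis
    using that by simp
qed

lemma ordLeq_finite_card_le:
  assumes "(card_of A, card_of B) \<in> ordLeq" and "finite B"
  shows "finite A" and "card A \<le> card B"
proof -
  show "finite A"
    using card_of_ordLeq_finite[OF assms] .
  obtain f where "inj_on f A" "f ` A \<subseteq> B"
    using assms(1) unfolding card_of_ordLeq[symmetric] by blast
  then show "card A \<le> card B"
    using card_inj_on_le assms(2) by blast
qed

lemma ordIso_finite_card_eq:
  assumes "(card_of A, card_of B) \<in> ordIso"
  shows "finite A \<longleftrightarrow> finite B" and "card A = card B"
proof -
  obtain f where "bij_betw f A B"
    using assms unfolding card_of_ordIso[symmetric] by blast
  then show "finite A \<longleftrightarrow> finite B" "card A = card B"
    by (simp_all add: bij_betw_finite bij_betw_same_card)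
qed

lemma chain_cover_singletons: "chain_cover P P"
  unfolding chain_cover_def
  by (intro exI[of _ "\<lambda>x. {x}"]) (auto intro: chainI)

lemma card_of_antichain_le_chain_cover:
  fixes P :: "'a::order set" and J :: "'i set"
  assumes "chain_cover P J" and "antichain_in P A"
  shows "(card_of A, card_of J) \<in> ordLeq"
proof -
  obtain Ch where chains: "\<And>j. j \<in> J \<Longrightarrow> Complete_Partial_Order.chain (\<le>) (Ch j)"
    and cover: "P = (\<Union>j\<in>J. Ch j)"
    using assms(1) unfolding chain_cover_def by blast
  have "\<forall>a\<in>A. \<exists>j. j \<in> J \<and> a \<in> Ch j"
    using assms(2) unfolding antichain_in_def cover by blast
  then obtain g where g: "\<forall>a\<in>A. g a \<in> J \<and> a \<in> Ch (g a)"
    by (rule bchoice[THEN exE])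
  have "inj_on g A"
  proof (rule inj_onI)
    fix a b assume ab: "a \<in> A" "b \<in> A" "g a = g b"
    then have "g a \<in> J" "a \<in> Ch (g a)" "b \<in> Ch (g a)"
      using g by auto
    then have "a \<le> b \<or> b \<le> a"
      by (intro chainD[OF chains])
    then show "a = b"
      using assms(2) ab(1,2) unfolding antichain_in_def by auto
  qed
  moreover have "g ` A \<subseteq> J"
    using g by blast
  ultimately show ?thesis
    unfolding card_of_ordLeq[symmetric] by blast
qed

lemma cov_is_finite_card_le_if_width_le:
  assumes "cov_is P J" and "width_le k P"
  shows "finite J" and "card J \<le> k"
proof -
  obtain c where "chain_colouring k P c"
    using dilworth[OF assms(2)] by blast
  then obtain R :: "'a set" where R: "finite R" "card R \<le> k" "chain_cover P R"
    using chain_cover_if_chain_colouring by blast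
  then have "(card_of J, card_of R) \<in> ordLeq"
    using assms(1) unfolding cov_is_def by blast
  then show "finite J" "card J \<le> k"
    using ordLeq_finite_card_le R(1,2) by (blast, fastforce)
qed

lemma cov_is_finite_iff_max_antichain:
  fixes P :: "'a::order set"
  assumes cov: "cov_is P J"
  shows "(finite J \<and> card J = n) \<longleftrightarrow>
    (\<exists>A. antichain_in P A \<and> finite A \<and> card A = n) \<and> (\<forall>A. antichain_in P A \<longrightarrow> finite A \<and> card A \<le> n)"
proof -
  have bound: "finite A" "card A \<le> card J" if "antichain_in P A" "finite J" for A
  proof -
    have "(card_of A, card_of J) \<in> ordLeq"
      using card_of_antichain_le_chain_cover[OF _ that(1)] cov unfolding cov_is_def by blast
    then show "finite A" "card A \<le> card J"
      using ordLeq_finite_card_le that(2) by blast+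
  qed
  show ?thesis
  proof
    assume J: "finite J \<and> card J = n"
    then have all: "\<forall>A. antichain_in P A \<longrightarrow> finite A \<and> card A \<le> n"
      using bound by blast
    have "\<exists>A. antichain_in P A \<and> finite A \<and> card A = n"
    proof (cases n)
      case 0
      then show ?thesis
        by (intro exI[of _ "{}"]) (simp add: antichain_in_def)
    next
      case (Suc m)
      show ?thesis
      proof (rule ccontr)
        assume none: "\<not> ?thesis"
        have "width_le m P"
          unfolding width_le_def
        proof (intro allI impI)
          fix A assume "antichain_in P A" "finite A"
          then have "card A \<le> Suc m" "card A \<noteq> Suc m"
            using all none Suc by blast+
          then show "card A \<le> m"
            by simp
        qed
        then have "card J \<le> m"
          by (rule cov_is_finite_card_le_if_width_le(2)[OF cov])
        with J Suc show False
          by simp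
      qed
    qed
    with all show "(\<exists>A. antichain_in P A \<and> finite A \<and> card A = n) \<and> (\<forall>A. antichain_in P A \<longrightarrow> finite A \<and> card A \<le> n)"
      by blast
  next
    assume max: "(\<exists>A. antichain_in P A \<and> finite A \<and> card A = n) \<and> (\<forall>A. antichain_in P A \<longrightarrow> finite A \<and> card A \<le> n)"
    then have "width_le n P"
      unfolding width_le_def by blast
    then have "finite J" "card J \<le> n"
      using cov_is_finite_card_le_if_width_le[OF cov] by blast+
    moreover obtain A where "antichain_in P A" "card A = n"
      using max by blast
    then have "n \<le> card J"
      using bound \<open>finite J\<close> by blast
    ultimately show "finite J \<and> card J = n"
      by simp
  qed
qed

lemma join_dim_ordIso_cov:
  fixes I J :: "'a::complete_lattice set"
  assumes sep: "\<And>x y::'a. \<not> x \<le> y \<Longrightarrow> \<exists>m\<in>mi_Delta. y \<le> m \<and> \<not> x \<le> m"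
    and dim: "join_dim_is TYPE('a) I" and cov: "cov_is (mi_Delta::'a set) J"
  shows "(card_of I, card_of J) \<in> ordIso"
proof -
  have "(card_of I, card_of J) \<in> ordLeq"
    using dim join_embeds_if_chain_cover[OF sep] cov unfolding join_dim_is_def cov_is_def by blast
  moreover have "(card_of J, card_of I) \<in> ordLeq"
    using cov chain_cover_if_join_embeds dim unfolding join_dim_is_def cov_is_def by blast
  ultimately show ?thesis
    using ordIso_iff_ordLeq by blast
qed

theorem corollary7p5:
  assumes "algebraic_lattice TYPE('a::complete_lattice)"
  shows "(\<exists>I::'a set. join_dim_is TYPE('a) I)
    \<and> (\<exists>J::'a set. cov_is (mi_Delta :: 'a set) J)
    \<and> (\<forall>I J. join_dim_is TYPE('a) I \<longrightarrow> cov_is (mi_Delta :: 'a set) J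
              \<longrightarrow> (card_of I, card_of J) \<in> ordIso)
    \<and> (\<forall>n::nat. (\<exists>I. join_dim_is TYPE('a) I \<and> finite I \<and> card I = n)
        \<longleftrightarrow> ((\<exists>A. antichain_in (mi_Delta :: 'a set) A \<and> finite A \<and> card A = n)
             \<and> (\<forall>A. antichain_in (mi_Delta :: 'a set) A \<longrightarrow> finite A \<and> card A \<le> n)))"
proof -
  have sep: "\<exists>m\<in>mi_Delta. y \<le> m \<and> \<not> x \<le> m" if "\<not> x \<le> y" for x y :: 'a
    using mi_Delta_separates[OF assms that] by blast
  have cover: "chain_cover (mi_Delta::'a set) (mi_Delta::'a set)"
    by (rule chain_cover_singletons)
  obtain I\<^sub>0 :: "'a set" where I\<^sub>0: "join_dim_is TYPE('a) I\<^sub>0"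
    using ex_card_of_minimal[of "join_embeds TYPE('a)", OF join_embeds_if_chain_cover[OF sep cover]]
    unfolding join_dim_is_def by blast
  obtain J\<^sub>0 :: "'a set" where J\<^sub>0: "cov_is (mi_Delta::'a set) J\<^sub>0"
    using ex_card_of_minimal[of "chain_cover mi_Delta", OF cover] unfolding cov_is_def by blast
  have iso: "(card_of I, card_of J) \<in> ordIso"
    if "join_dim_is TYPE('a) I" "cov_is (mi_Delta::'a set) J" for I J :: "'a set"
    using join_dim_ordIso_cov[OF sep that] .
  have dim_finite: "(\<exists>I. join_dim_is TYPE('a) I \<and> finite I \<and> card I = n) \<longleftrightarrow> finite J\<^sub>0 \<and> card J\<^sub>0 = n"
    for n
  proof
    assume "\<exists>I. join_dim_is TYPE('a) I \<and> finite I \<and> card I = n"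
    then obtain I where I: "join_dim_is TYPE('a) I" "finite I" "card I = n"
      by blast
    then show "finite J\<^sub>0 \<and> card J\<^sub>0 = n"
      using ordIso_finite_card_eq[OF iso[OF I(1) J\<^sub>0]] by simp
  next
    assume "finite J\<^sub>0 \<and> card J\<^sub>0 = n"
    then show "\<exists>I. join_dim_is TYPE('a) I \<and> finite I \<and> card I = n"
      using ordIso_finite_card_eq[OF iso[OF I\<^sub>0 J\<^sub>0]] I\<^sub>0 by (intro exI[of _ I\<^sub>0]) simp
  qed
  show ?thesis
  proof (intro conjI allI impI)
    show "\<exists>I::'a set. join_dim_is TYPE('a) I"
      using I\<^sub>0 ..
    show "\<exists>J::'a set. cov_is mi_Delta J"
      using J\<^sub>0 ..
  next
    fix I J :: "'a set"
    assume "join_dim_is TYPE('a) I" "cov_is mi_Delta J"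
    then show "(card_of I, card_of J) \<in> ordIso"
      by (rule iso)
  next
    fix n
    show "(\<exists>I. join_dim_is TYPE('a) I \<and> finite I \<and> card I = n) \<longleftrightarrow>
      (\<exists>A. antichain_in (mi_Delta :: 'a set) A \<and> finite A \<and> card A = n)
        \<and> (\<forall>A. antichain_in (mi_Delta :: 'a set) A \<longrightarrow> finite A \<and> card A \<le> n)"
      unfolding dim_finite by (rule cov_is_finite_iff_max_antichain[OF J\<^sub>0])
  qed
qed

end
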